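(* If $G$ is a bridgeless cubic graph, then $\omega'(G)\leq \frac{2}{3}\mu'_3(G)$.
   Context: A join of a graph $H$ is a set $J\subseteq E(H)$ such that every vertex has degree of the same parity in $H$ and in the spanning subgraph $(V(H),J)$. In a cubic graph every vertex has degree $1$ or $3$ in a join $J$; a vertex of degree $3$ in $J$ is a $J$-vertex and $n(J)$ is the number of $J$-vertices. The weak oddness $\omega'(G)$ is the minimum, over all joins $J$ of $G$, of the number of components with an odd number of vertices of the complement $(V(G),E(G)\setminus J)$. Given three joins $J_1,J_2,J_3$ of $G$, let $E_0$ be the set of edges lying in none of them; the weak core with respect to them is $G[E_0\cup E_2\cup E_3]$ (where $E_i$ is the set of edges in exactly $i$ of the joins), and it is called a weak $l$-core with $l=|E_0|+\frac{3}{2}\sum_{i=1}^3 n(J_i)$. Then $\mu'_3(G)$ is the minimum $l$ such that $G$ has a weak $l$-core, i.e. the minimum of $|E_0|+\frac{3}{2}\sum_{i=1}^3 n(J_i)$ over all triples of joins $J_1,J_2,J_3$ of $G$. *)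

theory Defs
  imports Complex_Main
begin

text \<open>Finite loopless multigraphs: vertex set V, edge set E (edges are abstract
  objects, so parallel edges are allowed), each edge e has a 2-element set
  ends e of endpoints in V.\<close>

definition multigraph :: "'a set \<Rightarrow> 'e set \<Rightarrow> ('e \<Rightarrow> 'a set) \<Rightarrow> bool" where
  "multigraph V E ends \<longleftrightarrow> finite V \<and> finite E \<and>
     (\<forall>e\<in>E. ends e \<subseteq> V \<and> card (ends e) = 2)"

definition deg :: "('e \<Rightarrow> 'a set) \<Rightarrow> 'e set \<Rightarrow> 'a \<Rightarrow> nat" where
  "deg ends F v = card {e\<in>F. v \<in> ends e}"

definition cubic :: "'a set \<Rightarrow> 'e set \<Rightarrow> ('e \<Rightarrow> 'a set) \<Rightarrow> bool" where
  "cubic V E ends \<longleftrightarrow> multigraph V E ends \<and> (\<forall>v\<in>V. deg ends E v = 3)"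

definition adj :: "('e \<Rightarrow> 'a set) \<Rightarrow> 'e set \<Rightarrow> ('a \<times> 'a) set" where
  "adj ends F = {(u, w). \<exists>e\<in>F. ends e = {u, w}}"

definition bridgeless :: "'a set \<Rightarrow> 'e set \<Rightarrow> ('e \<Rightarrow> 'a set) \<Rightarrow> bool" where
  "bridgeless V E ends \<longleftrightarrow>
     (\<forall>e\<in>E. \<forall>u w. ends e = {u, w} \<longrightarrow> (u, w) \<in> (adj ends (E - {e}))\<^sup>*)"

definition components :: "'a set \<Rightarrow> ('e \<Rightarrow> 'a set) \<Rightarrow> 'e set \<Rightarrow> 'a set set" where
  "components V ends F = (\<lambda>v. {u\<in>V. (v, u) \<in> (adj ends F)\<^sup>*}) ` V"

definition is_join :: "'a set \<Rightarrow> 'e set \<Rightarrow> ('e \<Rightarrow> 'a set) \<Rightarrow> 'e set \<Rightarrow> bool" where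
  "is_join V E ends J \<longleftrightarrow> J \<subseteq> E \<and>
     (\<forall>v\<in>V. even (deg ends J v) = even (deg ends E v))"

definition n_join :: "'a set \<Rightarrow> ('e \<Rightarrow> 'a set) \<Rightarrow> 'e set \<Rightarrow> nat" where
  "n_join V ends J = card {v\<in>V. deg ends J v = 3}"

definition odd_comps :: "'a set \<Rightarrow> 'e set \<Rightarrow> ('e \<Rightarrow> 'a set) \<Rightarrow> 'e set \<Rightarrow> nat" where
  "odd_comps V E ends J = card {C \<in> components V ends (E - J). odd (card C)}"

definition weak_oddness :: "'a set \<Rightarrow> 'e set \<Rightarrow> ('e \<Rightarrow> 'a set) \<Rightarrow> nat" where
  "weak_oddness V E ends = Min {odd_comps V E ends J | J. is_join V E ends J}"

definition mu3' :: "'a set \<Rightarrow> 'e set \<Rightarrow> ('e \<Rightarrow> 'a set) \<Rightarrow> real" where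
  "mu3' V E ends = Min {real (card {e\<in>E. e \<notin> J1 \<and> e \<notin> J2 \<and> e \<notin> J3})
        + 3/2 * real (n_join V ends J1 + n_join V ends J2 + n_join V ends J3)
      | J1 J2 J3. is_join V E ends J1 \<and> is_join V E ends J2 \<and> is_join V E ends J3}"

end

theory Submission imports Defs begin

text \<open>
  Fix three joins \<open>J\<^sub>1, J\<^sub>2, J\<^sub>3\<close>, let \<open>E\<^sub>0\<close> be the edges in none of them, \<open>T\<close> the vertices
  incident with at least two edges of \<open>E\<^sub>0\<close>, and \<open>X\<close> the edges of \<open>E\<^sub>0\<close> touching \<open>T\<close>.
  For a join \<open>J\<close> followed cyclically by \<open>J'\<close>, an odd component of \<open>G - J\<close> either contains
  a \<open>J\<close>-vertex (at most \<open>n(J)\<close> such components), or meets \<open>T\<close> (each such component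
  contains two edges of \<open>X\<close> at a vertex of \<open>T\<close>, so there are at most \<open>|X|/2\<close>), or else it
  carries an odd, hence positive, number of incidences with \<open>J \<inter> J'\<close>: every vertex has
  odd degree in \<open>J'\<close>, and the edges of \<open>J' - J\<close> never leave a component of \<open>G - J\<close>.
  Charging these incidences to vertices, a vertex of degree 1 in all three joins that is
  far from \<open>T\<close> carries at most \<open>deg\<^sub>E\<^sub>0(v)\<close> of them in total, and any other vertex at most
  twice the number of joins in which it has degree 3. Summing over the three joins gives
  \<open>2 \<Sum> odd_comps(J\<^sub>i) \<le> 3|X| + 4|E\<^sub>0 - X| + 6 \<Sum> n(J\<^sub>i) \<le> 4|E\<^sub>0| + 6 \<Sum> n(J\<^sub>i)\<close>, and the weak
  oddness is at most the least of the three numbers \<open>odd_comps(J\<^sub>i)\<close>.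
\<close>

section \<open>Components of spanning subgraphs\<close>

lemma adj_sym: "sym (adj ends F)"
  unfolding adj_def by (auto intro: symI simp: insert_commute)

definition component_of :: "'a set \<Rightarrow> ('e \<Rightarrow> 'a set) \<Rightarrow> 'e set \<Rightarrow> 'a \<Rightarrow> 'a set" where
  "component_of V ends F v = {u\<in>V. (v, u) \<in> (adj ends F)\<^sup>*}"

lemma components_eq_image: "components V ends F = component_of V ends F ` V"
  unfolding components_def component_of_def ..

lemma in_component_of_self: "v \<in> V \<Longrightarrow> v \<in> component_of V ends F v"
  unfolding component_of_def by simp

lemma component_of_eq:
  assumes "x \<in> component_of V ends F v"
  shows "component_of V ends F x = component_of V ends F v"
proof -
  have vx: "(v, x) \<in> (adj ends F)\<^sup>*" using assms unfolding component_of_def by simp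
  then have xv: "(x, v) \<in> (adj ends F)\<^sup>*" using sym_rtrancl[OF adj_sym] by (meson symD)
  show ?thesis
    unfolding component_of_def using rtrancl_trans[OF vx] rtrancl_trans[OF xv] by blast
qed

lemma component_eq_component_of:
  assumes "C \<in> components V ends F" "x \<in> C"
  shows "C = component_of V ends F x"
proof -
  obtain v where "C = component_of V ends F v"
    using assms(1) unfolding components_eq_image by blast
  then show ?thesis using assms(2) component_of_eq by metis
qed

lemma components_disjoint:
  assumes "C \<in> components V ends F" "D \<in> components V ends F" "C \<noteq> D"
  shows "C \<inter> D = {}"
  using assms component_eq_component_of by (metis disjoint_iff)

lemma component_subset: "C \<in> components V ends F \<Longrightarrow> C \<subseteq> V"
  unfolding components_eq_image component_of_def by blast

lemma finite_components: "finite V \<Longrightarrow> finite (components V ends F)"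
  unfolding components_eq_image by simp

lemma finite_component: "finite V \<Longrightarrow> C \<in> components V ends F \<Longrightarrow> finite C"
  by (meson component_subset finite_subset)

lemma edge_subset_component_of:
  assumes "e \<in> F" "ends e \<subseteq> V" "card (ends e) = 2" "v \<in> ends e"
  shows "ends e \<subseteq> component_of V ends F v"
proof -
  obtain a b where ab: "ends e = {a, b}" using assms(3) by (meson card_2_iff)
  then have "(a, b) \<in> adj ends F" using assms(1) unfolding adj_def by blast
  then have "(b, a) \<in> adj ends F" using adj_sym by (metis symD)
  have "(v, u) \<in> (adj ends F)\<^sup>*" if "u \<in> ends e" for u
    using assms(4) that ab \<open>(a, b) \<in> adj ends F\<close> \<open>(b, a) \<in> adj ends F\<close>
    by (metis empty_iff insert_iff r_into_rtrancl rtrancl.rtrancl_refl)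
  then show ?thesis
    using assms(2) unfolding component_of_def by blast
qed

lemma edge_subset_component:
  assumes "C \<in> components V ends F" "e \<in> F" "ends e \<subseteq> V" "card (ends e) = 2"
    "ends e \<inter> C \<noteq> {}"
  shows "ends e \<subseteq> C"
proof -
  obtain x where "x \<in> ends e" "x \<in> C" using assms(5) by blast
  then show ?thesis
    using component_eq_component_of[OF assms(1)] edge_subset_component_of[of e F ends V] assms(2-4)
    by metis
qed

lemma card_components_meeting_le:
  assumes "finite S"
  shows "card {C\<in>components V ends F. C \<inter> S \<noteq> {}} \<le> card S"
proof -
  have "{C\<in>components V ends F. C \<inter> S \<noteq> {}} \<subseteq> component_of V ends F ` S"
  proof
    fix C assume "C \<in> {C\<in>components V ends F. C \<inter> S \<noteq> {}}"
    then obtain x where C: "C \<in> components V ends F" "x \<in> C" and "x \<in> S" by blast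
    from C have "C = component_of V ends F x" by (rule component_eq_component_of)
    with \<open>x \<in> S\<close> show "C \<in> component_of V ends F ` S" by blast
  qed
  then have "card {C\<in>components V ends F. C \<inter> S \<noteq> {}} \<le> card (component_of V ends F ` S)"
    using assms by (intro card_mono) auto
  also have "\<dots> \<le> card S" using assms by (rule card_image_le)
  finally show ?thesis .
qed

lemma card_components_meeting_le_half:
  assumes "finite V" "finite X" "X \<subseteq> F"
    and X: "\<And>e. e \<in> X \<Longrightarrow> ends e \<subseteq> V \<and> card (ends e) = 2"
    and T: "\<And>v. v \<in> T \<Longrightarrow> 2 \<le> deg ends X v"
  shows "2 * card {C\<in>components V ends F. C \<inter> T \<noteq> {}} \<le> card X"
proof -
  let ?B = "{C\<in>components V ends F. C \<inter> T \<noteq> {}}"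
  define inner where "inner C = {e\<in>X. ends e \<subseteq> C}" for C
  have two_inner: "2 \<le> card (inner C)" if C: "C \<in> ?B" for C
  proof -
    obtain v where v: "v \<in> C" "v \<in> T" using C by blast
    have "ends e \<subseteq> C" if "e \<in> X" "v \<in> ends e" for e
      using C X[OF that(1)] \<open>X \<subseteq> F\<close> that v(1)
      by (intro edge_subset_component[of C V ends F]) auto
    then have "{e\<in>X. v \<in> ends e} \<subseteq> inner C" unfolding inner_def by blast
    then have "deg ends X v \<le> card (inner C)"
      unfolding deg_def inner_def using \<open>finite X\<close> by (intro card_mono) auto
    then show ?thesis using T[OF v(2)] by simp
  qed
  have "inner C \<inter> inner D = {}" if "C \<in> ?B" "D \<in> ?B" "C \<noteq> D" for C D
  proof -
    have "C \<inter> D = {}" using that components_disjoint by blast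
    moreover have "ends e \<noteq> {}" if "e \<in> X" for e using X[OF that] by auto
    ultimately show ?thesis unfolding inner_def by blast
  qed
  then have "(\<Sum>C\<in>?B. card (inner C)) = card (\<Union> (inner ` ?B))"
    using \<open>finite V\<close> \<open>finite X\<close>
    by (intro card_UN_disjoint[symmetric]) (auto simp: finite_components inner_def)
  also have "\<dots> \<le> card X"
    using \<open>finite X\<close> by (intro card_mono) (auto simp: inner_def)
  finally show ?thesis
    using sum_mono[of ?B "\<lambda>_. 2" "\<lambda>C. card (inner C)"] two_inner by simp
qed

lemma deg_mono: "finite F \<Longrightarrow> F' \<subseteq> F \<Longrightarrow> deg ends F' v \<le> deg ends F v"
  unfolding deg_def by (intro card_mono) auto

lemma deg_Int_Diff:
  assumes "finite F"
  shows "deg ends F v = deg ends (F \<inter> F') v + deg ends (F - F') v"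
proof -
  have "{e\<in>F. v \<in> ends e} = {e\<in>F \<inter> F'. v \<in> ends e} \<union> {e\<in>F - F'. v \<in> ends e}" by blast
  then show ?thesis
    unfolding deg_def using assms by (simp add: card_Un_disjoint disjoint_iff)
qed

lemma sum_deg_eq_sum_card_ends:
  assumes "finite A" "finite F"
  shows "(\<Sum>v\<in>A. deg ends F v) = (\<Sum>e\<in>F. card (ends e \<inter> A))"
proof -
  have "(\<Sum>v\<in>A. deg ends F v) = (\<Sum>v\<in>A. \<Sum>e\<in>F. of_bool (v \<in> ends e))"
    unfolding deg_def using assms(2) by (simp add: sum_of_bool_eq Int_def conj_commute)
  also have "\<dots> = (\<Sum>e\<in>F. \<Sum>v\<in>A. of_bool (v \<in> ends e))"
    by (rule sum.swap)
  also have "\<dots> = (\<Sum>e\<in>F. card (ends e \<inter> A))"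
    using assms(1) by (simp add: sum_of_bool_eq Int_commute Int_def)
  finally show ?thesis .
qed

section \<open>Odd components of the complement of a join\<close>

lemma card_three_eq_pairs:
  "card {a, b, c} \<ge> 2 \<Longrightarrow> of_bool (a = b) + of_bool (b = c) + of_bool (c = a) + card {a, b, c} = (3::nat)"
  by (auto simp: card_insert_if)

text \<open>What \<open>v\<close> pays towards the odd components of \<open>G - J\<close> that contain no \<open>J\<close>-vertex
  and avoid \<open>T\<close>; each of them receives at least one unit, by parity.\<close>
definition odd_charge ::
    "'a set \<Rightarrow> 'e set \<Rightarrow> ('e \<Rightarrow> 'a set) \<Rightarrow> 'a set \<Rightarrow> 'e set \<Rightarrow> 'e set \<Rightarrow> 'a \<Rightarrow> nat" where
  "odd_charge V E ends T J J' v =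
     (if deg ends J v \<noteq> 3 \<and> component_of V ends (E - J) v \<inter> T = {}
      then deg ends (J' \<inter> J) v else 0)"

locale cubic_graph =
  fixes V :: "'a set" and E :: "'e set" and ends :: "'e \<Rightarrow> 'a set"
  assumes cubic: "cubic V E ends"
begin

lemma finite_V: "finite V" and finite_E: "finite E"
  and ends_subset: "e \<in> E \<Longrightarrow> ends e \<subseteq> V" and card_ends: "e \<in> E \<Longrightarrow> card (ends e) = 2"
  and deg_E: "v \<in> V \<Longrightarrow> deg ends E v = 3"
  using cubic unfolding cubic_def multigraph_def by auto

lemma join_subset: "is_join V E ends J \<Longrightarrow> J \<subseteq> E"
  unfolding is_join_def by simp

lemma finite_join: "is_join V E ends J \<Longrightarrow> finite J"
  using join_subset finite_E finite_subset by blast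

lemma odd_deg_join: "is_join V E ends J \<Longrightarrow> v \<in> V \<Longrightarrow> odd (deg ends J v)"
  unfolding is_join_def using deg_E by simp

lemma deg_join_cases:
  assumes "is_join V E ends J" "v \<in> V"
  shows "deg ends J v = 1 \<or> deg ends J v = 3"
proof -
  have "deg ends J v \<le> 3"
    using deg_mono[OF finite_E join_subset[OF assms(1)]] deg_E[OF assms(2)] by metis
  moreover have "\<And>d::nat. d \<le> 3 \<Longrightarrow> odd d \<Longrightarrow> d = 1 \<or> d = 3" by presburger
  ultimately show ?thesis using odd_deg_join[OF assms] by blast
qed

lemma sum_deg:
  assumes "F \<subseteq> E"
  shows "(\<Sum>v\<in>V. deg ends F v) = 2 * card F"
proof -
  have "finite F" using assms finite_E by (rule finite_subset)
  then have "(\<Sum>v\<in>V. deg ends F v) = (\<Sum>e\<in>F. card (ends e \<inter> V))"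
    by (rule sum_deg_eq_sum_card_ends[OF finite_V])
  also have "\<dots> = (\<Sum>e\<in>F. 2)"
    using assms ends_subset card_ends by (intro sum.cong) (auto simp: Int_absorb2)
  finally show ?thesis by simp
qed

lemma sum_of_bool_join_vertex: "(\<Sum>v\<in>V. of_bool (deg ends J v = 3)) = n_join V ends J"
  unfolding n_join_def using finite_V by (simp add: sum_of_bool_eq Int_def)

lemma odd_sum_deg_Int_in_odd_component:
  assumes J': "is_join V E ends J'"
    and C: "C \<in> components V ends (E - J)" and odd_C: "odd (card C)"
  shows "odd (\<Sum>v\<in>C. deg ends (J' \<inter> J) v)"
proof -
  have "C \<subseteq> V" by (rule component_subset[OF C])
  have finite_C: "finite C" by (rule finite_component[OF finite_V C])
  have "{v\<in>C. odd (deg ends J' v)} = C" using odd_deg_join[OF J'] \<open>C \<subseteq> V\<close> by blast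
  then have "odd (\<Sum>v\<in>C. deg ends J' v)" using odd_C finite_C by (simp add: even_sum_iff)
  moreover have "(\<Sum>v\<in>C. deg ends J' v)
      = (\<Sum>v\<in>C. deg ends (J' \<inter> J) v) + (\<Sum>v\<in>C. deg ends (J' - J) v)"
    unfolding sum.distrib[symmetric] by (rule sum.cong[OF refl deg_Int_Diff[OF finite_join[OF J']]])
  moreover have "even (card (ends e \<inter> C))" if "e \<in> J' - J" for e
  proof -
    have e: "e \<in> E" "e \<in> E - J" using that join_subset[OF J'] by auto
    have "ends e \<inter> C = {} \<or> ends e \<inter> C = ends e"
      using edge_subset_component[OF C e(2) ends_subset[OF e(1)] card_ends[OF e(1)]] by blast
    then show ?thesis using card_ends[OF e(1)] by auto
  qed
  then have "even (\<Sum>e\<in>J' - J. card (ends e \<inter> C))" by (rule dvd_sum)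
  then have "even (\<Sum>v\<in>C. deg ends (J' - J) v)"
    using sum_deg_eq_sum_card_ends[OF finite_C, of "J' - J" ends] finite_join[OF J'] by simp
  ultimately show ?thesis by simp
qed

lemma card_odd_components_avoiding_le:
  assumes J': "is_join V E ends J'"
  shows "card {C\<in>components V ends (E - J). odd (card C)
                 \<and> C \<inter> {v\<in>V. deg ends J v = 3} = {} \<and> C \<inter> T = {}}
         \<le> (\<Sum>v\<in>V. odd_charge V E ends T J J' v)"
    (is "card ?A \<le> _")
proof -
  let ?w = "\<lambda>v. deg ends (J' \<inter> J) v"
  have "card ?A = (\<Sum>C\<in>?A. 1)" by simp
  also have "\<dots> \<le> (\<Sum>C\<in>?A. \<Sum>v\<in>C. ?w v)"
  proof (rule sum_mono)
    fix C assume "C \<in> ?A"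
    then have "odd (\<Sum>v\<in>C. ?w v)" using odd_sum_deg_Int_in_odd_component[OF J'] by blast
    then show "1 \<le> (\<Sum>v\<in>C. ?w v)" using odd_pos by (metis Suc_leI One_nat_def)
  qed
  also have "\<dots> = (\<Sum>v\<in>\<Union>?A. ?w v)"
  proof (rule sum.Union_disjoint[symmetric, simplified])
    show "\<forall>C\<in>?A. finite C" using finite_component[OF finite_V] by blast
    show "\<forall>C\<in>?A. \<forall>D\<in>?A. C \<noteq> D \<longrightarrow> C \<inter> D = {}"
      using components_disjoint[of _ V ends "E - J"] by blast
  qed
  also have "\<dots> = (\<Sum>v\<in>\<Union>?A. odd_charge V E ends T J J' v)"
  proof (rule sum.cong[OF refl])
    fix v assume "v \<in> \<Union>?A"
    then obtain C where C: "C \<in> ?A" "v \<in> C" by blast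
    then have K: "C \<in> components V ends (E - J)" by blast
    then have "C = component_of V ends (E - J) v" using C(2) by (rule component_eq_component_of)
    moreover have "v \<in> V" using component_subset[OF K] C(2) by blast
    ultimately show "?w v = odd_charge V E ends T J J' v"
      using C unfolding odd_charge_def by auto
  qed
  also have "\<dots> \<le> (\<Sum>v\<in>V. odd_charge V E ends T J J' v)"
    using finite_V component_subset[of _ V ends "E - J"] by (intro sum_mono2) blast+
  finally show ?thesis .
qed

lemma odd_comps_le:
  assumes J': "is_join V E ends J'"
  shows "odd_comps V E ends J \<le> n_join V ends J + card {C\<in>components V ends (E - J). C \<inter> T \<noteq> {}}
           + (\<Sum>v\<in>V. odd_charge V E ends T J J' v)"
proof -
  let ?K = "components V ends (E - J)"
  let ?N = "{v\<in>V. deg ends J v = 3}"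
  let ?A = "{C\<in>?K. C \<inter> ?N \<noteq> {}}" and ?B = "{C\<in>?K. C \<inter> T \<noteq> {}}"
    and ?D = "{C\<in>?K. odd (card C) \<and> C \<inter> ?N = {} \<and> C \<inter> T = {}}"
  have "odd_comps V E ends J \<le> card (?A \<union> ?B \<union> ?D)"
    unfolding odd_comps_def using finite_components[OF finite_V, of ends "E - J"]
    by (intro card_mono) auto
  also have "\<dots> \<le> card ?A + card ?B + card ?D"
    by (meson add_right_mono card_Un_le le_trans)
  also have "card ?A \<le> n_join V ends J"
    unfolding n_join_def using finite_V by (intro card_components_meeting_le) simp
  finally show ?thesis using card_odd_components_avoiding_le[OF J', of J T] by linarith
qed

lemma odd_charge_le_one:
  assumes "is_join V E ends J" "v \<in> V"
  shows "odd_charge V E ends T J J' v + of_bool (deg ends J v = 3) \<le> 1"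
proof (cases "deg ends J v = 3")
  case False
  then have "deg ends J v = 1" using deg_join_cases[OF assms] by simp
  moreover have "deg ends (J' \<inter> J) v \<le> deg ends J v"
    using finite_join[OF assms(1)] by (rule deg_mono) blast
  ultimately show ?thesis using False unfolding odd_charge_def by simp
qed (simp add: odd_charge_def)

lemma odd_charge_eq_0:
  assumes "x \<in> component_of V ends (E - J) v" "x \<in> T"
  shows "odd_charge V E ends T J J' v = 0"
  using assms unfolding odd_charge_def by auto

lemma join_edge_unique:
  assumes "is_join V E ends J" "v \<in> V" "deg ends J v \<noteq> 3"
  obtains a where "{e\<in>J. v \<in> ends e} = {a}"
  using deg_join_cases[OF assms(1,2)] assms(3) unfolding deg_def by (metis card_1_singletonE)

text \<open>At a vertex of degree 1 in all three joins, the unique edges \<open>a\<^sub>i \<in> J\<^sub>i\<close> at \<open>v\<close> leave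
  \<open>3 - |{a\<^sub>1, a\<^sub>2, a\<^sub>3}|\<close> edges of \<open>E\<^sub>0\<close> at \<open>v\<close>; if that is at most one, the \<open>a\<^sub>i\<close> are not all
  equal and this number equals the number of coincidences \<open>a\<^sub>i = a\<^sub>j\<close>.\<close>
lemma sum_deg_Int_joins_eq:
  assumes J1: "is_join V E ends J1" and J2: "is_join V E ends J2" and J3: "is_join V E ends J3"
    and v: "v \<in> V" and not_join_vertex: "deg ends J1 v \<noteq> 3" "deg ends J2 v \<noteq> 3" "deg ends J3 v \<noteq> 3"
    and E0: "E0 = {e\<in>E. e \<notin> J1 \<and> e \<notin> J2 \<and> e \<notin> J3}" and deg_E0_le: "deg ends E0 v \<le> 1"
  shows "deg ends (J2 \<inter> J1) v + deg ends (J3 \<inter> J2) v + deg ends (J1 \<inter> J3) v = deg ends E0 v"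
proof -
  obtain a1 where a1: "{e\<in>J1. v \<in> ends e} = {a1}"
    using join_edge_unique[OF J1 v not_join_vertex(1)] .
  obtain a2 where a2: "{e\<in>J2. v \<in> ends e} = {a2}"
    using join_edge_unique[OF J2 v not_join_vertex(2)] .
  obtain a3 where a3: "{e\<in>J3. v \<in> ends e} = {a3}"
    using join_edge_unique[OF J3 v not_join_vertex(3)] .
  let ?S = "{e\<in>E. v \<in> ends e}"
  have "{a1, a2, a3} \<subseteq> ?S" using a1 a2 a3 join_subset[OF J1] join_subset[OF J2] join_subset[OF J3] by blast
  moreover have "{e\<in>E0. v \<in> ends e} = ?S - {a1, a2, a3}"
    unfolding E0 using a1 a2 a3 by blast
  ultimately have deg_E0: "deg ends E0 v = 3 - card {a1, a2, a3}"
    using deg_E[OF v] finite_E unfolding deg_def by (simp add: card_Diff_subset finite_subset)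
  have "{e\<in>J \<inter> J'. v \<in> ends e} = {e\<in>J. v \<in> ends e} \<inter> {e\<in>J'. v \<in> ends e}" for J J'
    by blast
  then have "deg ends (J2 \<inter> J1) v = of_bool (a1 = a2)" "deg ends (J3 \<inter> J2) v = of_bool (a2 = a3)"
    "deg ends (J1 \<inter> J3) v = of_bool (a3 = a1)"
    unfolding deg_def using a1 a2 a3 by auto
  moreover have "card {a1, a2, a3} \<le> 3" by (simp add: card_insert_le_m1)
  ultimately show ?thesis
    using card_three_eq_pairs[of a1 a2 a3] deg_E0 deg_E0_le by linarith
qed

lemma odd_charge_sum_le:
  assumes J1: "is_join V E ends J1" and J2: "is_join V E ends J2" and J3: "is_join V E ends J3"
    and v: "v \<in> V"
    and E0: "E0 = {e\<in>E. e \<notin> J1 \<and> e \<notin> J2 \<and> e \<notin> J3}"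
    and T: "T = {v\<in>V. 2 \<le> deg ends E0 v}"
    and X: "X = {e\<in>E0. ends e \<inter> T \<noteq> {}}"
  shows "odd_charge V E ends T J1 J2 v + odd_charge V E ends T J2 J3 v + odd_charge V E ends T J3 J1 v
         \<le> deg ends (E0 - X) v
            + 2 * (of_bool (deg ends J1 v = 3) + of_bool (deg ends J2 v = 3) + of_bool (deg ends J3 v = 3))"
proof -
  consider (join_vertex) "deg ends J1 v = 3 \<or> deg ends J2 v = 3 \<or> deg ends J3 v = 3"
    | (near_T) "v \<in> T \<or> (\<exists>e\<in>X. v \<in> ends e)"
    | (far) "deg ends J1 v \<noteq> 3" "deg ends J2 v \<noteq> 3" "deg ends J3 v \<noteq> 3"
        "v \<notin> T" "\<forall>e\<in>X. v \<notin> ends e"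
    by blast
  then show ?thesis
  proof cases
    case join_vertex
    then show ?thesis
      using odd_charge_le_one[OF J1 v, of T J2] odd_charge_le_one[OF J2 v, of T J3]
        odd_charge_le_one[OF J3 v, of T J1]
      by auto
  next
    case near_T
    have "odd_charge V E ends T J J' v = 0" if "X \<subseteq> E - J" for J J'
    proof -
      obtain x where "x \<in> component_of V ends (E - J) v" "x \<in> T"
      proof (cases "v \<in> T")
        case True
        then show ?thesis using that in_component_of_self[OF v] by blast
      next
        case False
        then obtain e where e: "e \<in> X" "v \<in> ends e" using near_T by blast
        then have "e \<in> E" "ends e \<inter> T \<noteq> {}" unfolding X E0 by auto
        moreover have "ends e \<subseteq> component_of V ends (E - J) v"
          using e \<open>X \<subseteq> E - J\<close> \<open>e \<in> E\<close> ends_subset card_ends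
          by (intro edge_subset_component_of) auto
        ultimately show ?thesis using that by blast
      qed
      then show ?thesis by (rule odd_charge_eq_0)
    qed
    moreover have "X \<subseteq> E - J1" "X \<subseteq> E - J2" "X \<subseteq> E - J3" unfolding X E0 by auto
    ultimately show ?thesis by simp
  next
    case far
    have "deg ends E0 v \<le> 1" using far(4) v unfolding T by simp
    have "{e\<in>E0 - X. v \<in> ends e} = {e\<in>E0. v \<in> ends e}" using far(5) by blast
    then have "deg ends (E0 - X) v = deg ends E0 v" unfolding deg_def by simp
    moreover have charge_le: "odd_charge V E ends T J J' v \<le> deg ends (J' \<inter> J) v" for J J'
      unfolding odd_charge_def by simp
    ultimately have "odd_charge V E ends T J1 J2 v + odd_charge V E ends T J2 J3 v
        + odd_charge V E ends T J3 J1 v \<le> deg ends (E0 - X) v"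
      using sum_deg_Int_joins_eq[OF J1 J2 J3 v far(1-3) E0 \<open>deg ends E0 v \<le> 1\<close>]
        charge_le[of J1 J2] charge_le[of J2 J3] charge_le[of J3 J1] by linarith
    then show ?thesis by (rule trans_le_add1)
  qed
qed

lemma odd_comps_sum_le:
  assumes J1: "is_join V E ends J1" and J2: "is_join V E ends J2" and J3: "is_join V E ends J3"
  shows "2 * (odd_comps V E ends J1 + odd_comps V E ends J2 + odd_comps V E ends J3)
     \<le> 4 * card {e\<in>E. e \<notin> J1 \<and> e \<notin> J2 \<and> e \<notin> J3}
        + 6 * (n_join V ends J1 + n_join V ends J2 + n_join V ends J3)"
proof -
  define E0 where "E0 = {e\<in>E. e \<notin> J1 \<and> e \<notin> J2 \<and> e \<notin> J3}"
  define T where "T = {v\<in>V. 2 \<le> deg ends E0 v}"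
  define X where "X = {e\<in>E0. ends e \<inter> T \<noteq> {}}"
  let ?n = "n_join V ends J1 + n_join V ends J2 + n_join V ends J3"
  let ?meet = "\<lambda>J. card {C\<in>components V ends (E - J). C \<inter> T \<noteq> {}}"
  let ?charge = "\<lambda>J J'. \<Sum>v\<in>V. odd_charge V E ends T J J' v"
  have "X \<subseteq> E0" "E0 \<subseteq> E" unfolding X_def E0_def by auto
  then have "finite E0" "finite X" using finite_E by (auto intro: finite_subset)
  have meet_le: "2 * ?meet J \<le> card X" if "X \<subseteq> E - J" for J
  proof (rule card_components_meeting_le_half[OF finite_V \<open>finite X\<close> that])
    show "ends e \<subseteq> V \<and> card (ends e) = 2" if "e \<in> X" for e
      using that \<open>X \<subseteq> E0\<close> \<open>E0 \<subseteq> E\<close> ends_subset card_ends by blast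
    show "2 \<le> deg ends X v" if "v \<in> T" for v
    proof -
      have "{e\<in>X. v \<in> ends e} = {e\<in>E0. v \<in> ends e}" unfolding X_def using that by blast
      then show ?thesis using that unfolding deg_def T_def by simp
    qed
  qed
  have X_sub: "X \<subseteq> E - J1" "X \<subseteq> E - J2" "X \<subseteq> E - J3" unfolding X_def E0_def by auto
  have meet: "2 * (?meet J1 + ?meet J2 + ?meet J3) \<le> 3 * card X"
    using meet_le[OF X_sub(1)] meet_le[OF X_sub(2)] meet_le[OF X_sub(3)] by (simp add: algebra_simps)
  have "?charge J1 J2 + ?charge J2 J3 + ?charge J3 J1
      \<le> (\<Sum>v\<in>V. deg ends (E0 - X) v
            + 2 * (of_bool (deg ends J1 v = 3) + of_bool (deg ends J2 v = 3) + of_bool (deg ends J3 v = 3)))"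
    unfolding sum.distrib[symmetric]
    by (rule sum_mono) (rule odd_charge_sum_le[OF J1 J2 J3 _ E0_def T_def X_def])
  also have "\<dots> = 2 * card (E0 - X) + 2 * ?n"
    using sum_deg[of "E0 - X"] \<open>E0 \<subseteq> E\<close>
    by (simp add: sum.distrib sum_distrib_left[symmetric] sum_of_bool_join_vertex subset_iff)
  finally have charge: "?charge J1 J2 + ?charge J2 J3 + ?charge J3 J1 \<le> 2 * card (E0 - X) + 2 * ?n" .
  have "card E0 = card (E0 - X) + card X"
    using \<open>finite E0\<close> \<open>X \<subseteq> E0\<close> by (simp add: card_Diff_subset card_mono finite_subset)
  moreover have "odd_comps V E ends J1 + odd_comps V E ends J2 + odd_comps V E ends J3
      \<le> ?n + (?meet J1 + ?meet J2 + ?meet J3) + (?charge J1 J2 + ?charge J2 J3 + ?charge J3 J1)"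
    using odd_comps_le[OF J2, of J1 T] odd_comps_le[OF J3, of J2 T] odd_comps_le[OF J1, of J3 T]
    by linarith
  ultimately show ?thesis unfolding E0_def[symmetric] using meet charge by (simp add: algebra_simps)
qed

lemma finite_joins: "finite {J. is_join V E ends J}"
proof -
  have "{J. is_join V E ends J} \<subseteq> Pow E" unfolding is_join_def by blast
  then show ?thesis using finite_E by (meson finite_Pow_iff finite_subset)
qed

lemma weak_oddness_le_odd_comps:
  assumes "is_join V E ends J"
  shows "weak_oddness V E ends \<le> odd_comps V E ends J"
proof -
  have "{odd_comps V E ends J | J. is_join V E ends J} = odd_comps V E ends ` {J. is_join V E ends J}"
    by blast
  then have "finite {odd_comps V E ends J | J. is_join V E ends J}"
    using finite_joins by simp
  then show ?thesis unfolding weak_oddness_def using assms by (intro Min_le) blast+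
qed

lemma mu3'_attained:
  obtains J1 J2 J3 where "is_join V E ends J1" "is_join V E ends J2" "is_join V E ends J3"
    and "mu3' V E ends = real (card {e\<in>E. e \<notin> J1 \<and> e \<notin> J2 \<and> e \<notin> J3})
        + 3/2 * real (n_join V ends J1 + n_join V ends J2 + n_join V ends J3)"
proof -
  let ?f = "\<lambda>(J1, J2, J3). real (card {e\<in>E. e \<notin> J1 \<and> e \<notin> J2 \<and> e \<notin> J3})
        + 3/2 * real (n_join V ends J1 + n_join V ends J2 + n_join V ends J3)"
  let ?Js = "{J. is_join V E ends J}"
  let ?M = "{real (card {e\<in>E. e \<notin> J1 \<and> e \<notin> J2 \<and> e \<notin> J3})
        + 3/2 * real (n_join V ends J1 + n_join V ends J2 + n_join V ends J3)
      | J1 J2 J3. is_join V E ends J1 \<and> is_join V E ends J2 \<and> is_join V E ends J3}"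
  have "?M \<subseteq> ?f ` (?Js \<times> ?Js \<times> ?Js)"
  proof
    fix x assume "x \<in> ?M"
    then obtain J1 J2 J3 where "(J1, J2, J3) \<in> ?Js \<times> ?Js \<times> ?Js" "x = ?f (J1, J2, J3)" by auto
    then show "x \<in> ?f ` (?Js \<times> ?Js \<times> ?Js)" by (rule rev_image_eqI)
  qed
  then have "finite ?M" using finite_joins by (meson finite_SigmaI finite_imageI finite_subset)
  moreover have "is_join V E ends E" unfolding is_join_def by simp
  then have "?M \<noteq> {}" by blast
  ultimately have "mu3' V E ends \<in> ?M" unfolding mu3'_def by (rule Min_in)
  then show ?thesis using that by blast
qed

end

theorem corollary2p4:
  fixes V :: "'a set" and E :: "'e set" and ends :: "'e \<Rightarrow> 'a set"
  assumes "cubic V E ends" and "bridgeless V E ends"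
  shows "real (weak_oddness V E ends) \<le> 2/3 * mu3' V E ends"
proof -
  interpret cubic_graph V E ends using assms(1) by (rule cubic_graph.intro)
  obtain J1 J2 J3 where J: "is_join V E ends J1" "is_join V E ends J2" "is_join V E ends J3"
    and mu: "mu3' V E ends = real (card {e\<in>E. e \<notin> J1 \<and> e \<notin> J2 \<and> e \<notin> J3})
        + 3/2 * real (n_join V ends J1 + n_join V ends J2 + n_join V ends J3)"
    by (rule mu3'_attained)
  have "6 * weak_oddness V E ends
      \<le> 2 * (odd_comps V E ends J1 + odd_comps V E ends J2 + odd_comps V E ends J3)"
    using weak_oddness_le_odd_comps[OF J(1)] weak_oddness_le_odd_comps[OF J(2)]
      weak_oddness_le_odd_comps[OF J(3)] by simp
  also have "\<dots> \<le> 4 * card {e\<in>E. e \<notin> J1 \<and> e \<notin> J2 \<and> e \<notin> J3}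
        + 6 * (n_join V ends J1 + n_join V ends J2 + n_join V ends J3)"
    by (rule odd_comps_sum_le[OF J])
  finally show ?thesis unfolding mu using of_nat_mono[where 'a=real] by (fastforce simp: field_simps)
qed

end
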